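(* Let $\mathcal{X}\subset\mathbb{R}^d$ be compact, $k$ a kernel with $k(x,y)\le1$ for all $x,y$, $\sigma>0$, and $f\in\mathcal{H}_k$. Run Algorithm 3 with observations $y_t=f(x_t)$ (i.e. $h=f$, $g=0$): $x_t\in\arg\max_{x\in\mathcal{X}}\widehat m_{t-1}(x)+\|f\|_{\mathcal{H}_k}\widehat\sigma_{t-1}(x)$, assuming maximizers exist and the points $x_1,\dots,x_T$ are pairwise distinct. Let $C_1=\frac{8}{\log(1+\sigma^{-2})}$. Then $$R_T\le\|f\|_{\mathcal{H}_k}\sqrt{TC_1\gamma_T}+2T\|f\|_{\mathcal{H}_k}\sigma,\qquad r_T\le\|f\|_{\mathcal{H}_k}\sqrt{\frac{C_1\gamma_T}{T}}+2\|f\|_{\mathcal{H}_k}\sigma.$$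
   Context: $\mathbf{k}_t(x)=[k(x,x_i)]_{i\le t}$, $\mathbf{K}_t=[k(x_i,x_j)]_{i,j\le t}$, $\mathbf{y}_t=[y_i]_{i\le t}$, $\widehat m_t(x)=\mathbf{k}_t(x)^T(\mathbf{K}_t+\sigma^2I)^{-1}\mathbf{y}_t$, $\widehat\sigma_t^2(x)=k(x,x)-\mathbf{k}_t(x)^T(\mathbf{K}_t+\sigma^2I)^{-1}\mathbf{k}_t(x)$, $\widehat m_0\equiv0$, $\widehat\sigma_0^2(x)=k(x,x)$. $x^*\in\arg\max_{\mathcal{X}}f$; $R_T=\sum_{t=1}^T(f(x^* )-f(x_t))$; $r_T=f(x^* )-\max_{t\le T}f(x_t)$; $\gamma_T=\max_{x_1,\dots,x_T\in\mathcal{X}}\frac12\log\det(\mathbf{I}_T+\sigma^{-2}\mathbf{K}_T)$. *)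

theory Defs
  imports "HOL-Analysis.Analysis" "Jordan_Normal_Form.Determinant"
begin

definition kernel_on :: "('a \<Rightarrow> 'a \<Rightarrow> real) \<Rightarrow> 'a set \<Rightarrow> bool" where
  "kernel_on k X \<longleftrightarrow> (\<forall>x\<in>X. \<forall>y\<in>X. k x y = k y x) \<and>
     (\<forall>ps :: (real \<times> 'a) list. set (map snd ps) \<subseteq> X \<longrightarrow>
        (\<Sum>i<length ps. \<Sum>j<length ps. fst (ps!i) * fst (ps!j) * k (snd (ps!i)) (snd (ps!j))) \<ge> 0)"

text \<open>Elements of the pre-RKHS span{k(.,x) : x in X} are represented by finite lists of
  (coefficient, centre) pairs.\<close>
definition pre_eval :: "('a \<Rightarrow> 'a \<Rightarrow> real) \<Rightarrow> (real \<times> 'a) list \<Rightarrow> 'a \<Rightarrow> real" where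
  "pre_eval k ps x = (\<Sum>i<length ps. fst (ps!i) * k x (snd (ps!i)))"

definition pre_norm_sq :: "('a \<Rightarrow> 'a \<Rightarrow> real) \<Rightarrow> (real \<times> 'a) list \<Rightarrow> real" where
  "pre_norm_sq k ps = (\<Sum>i<length ps. \<Sum>j<length ps. fst (ps!i) * fst (ps!j) * k (snd (ps!i)) (snd (ps!j)))"

definition pre_diff :: "(real \<times> 'a) list \<Rightarrow> (real \<times> 'a) list \<Rightarrow> (real \<times> 'a) list" where
  "pre_diff ps qs = ps @ map (\<lambda>(c, x). (- c, x)) qs"

definition rkhs_approx :: "('a \<Rightarrow> 'a \<Rightarrow> real) \<Rightarrow> 'a set \<Rightarrow> ('a \<Rightarrow> real) \<Rightarrow> (nat \<Rightarrow> (real \<times> 'a) list) \<Rightarrow> bool" where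
  "rkhs_approx k X f s \<longleftrightarrow> (\<forall>n. set (map snd (s n)) \<subseteq> X) \<and>
     (\<forall>e>0. \<exists>N. \<forall>m\<ge>N. \<forall>n\<ge>N. pre_norm_sq k (pre_diff (s m) (s n)) < e) \<and>
     (\<forall>x\<in>X. (\<lambda>n. pre_eval k (s n) x) \<longlonglongrightarrow> f x)"

definition in_rkhs :: "('a \<Rightarrow> 'a \<Rightarrow> real) \<Rightarrow> 'a set \<Rightarrow> ('a \<Rightarrow> real) \<Rightarrow> bool" where
  "in_rkhs k X f \<longleftrightarrow> (\<exists>s. rkhs_approx k X f s)"

definition rkhs_norm :: "('a \<Rightarrow> 'a \<Rightarrow> real) \<Rightarrow> 'a set \<Rightarrow> ('a \<Rightarrow> real) \<Rightarrow> real" where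
  "rkhs_norm k X f = lim (\<lambda>n. sqrt (pre_norm_sq k ((SOME s. rkhs_approx k X f s) n)))"

definition inv_mat :: "real mat \<Rightarrow> real mat" where
  "inv_mat A = (SOME B. B \<in> carrier_mat (dim_row A) (dim_row A) \<and>
      A * B = 1\<^sub>m (dim_row A) \<and> B * A = 1\<^sub>m (dim_row A))"

text \<open>Data: points xs 1, ..., xs t and observations ys 1, ..., ys t (1-indexed).\<close>
definition kvec :: "('a \<Rightarrow> 'a \<Rightarrow> real) \<Rightarrow> (nat \<Rightarrow> 'a) \<Rightarrow> nat \<Rightarrow> 'a \<Rightarrow> real vec" where
  "kvec k xs t x = vec t (\<lambda>i. k x (xs (Suc i)))"

definition Kmat :: "('a \<Rightarrow> 'a \<Rightarrow> real) \<Rightarrow> (nat \<Rightarrow> 'a) \<Rightarrow> nat \<Rightarrow> real mat" where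
  "Kmat k xs t = mat t t (\<lambda>(i, j). k (xs (Suc i)) (xs (Suc j)))"

definition yvec :: "(nat \<Rightarrow> real) \<Rightarrow> nat \<Rightarrow> real vec" where
  "yvec ys t = vec t (\<lambda>i. ys (Suc i))"

definition post_mean :: "('a \<Rightarrow> 'a \<Rightarrow> real) \<Rightarrow> real \<Rightarrow> (nat \<Rightarrow> 'a) \<Rightarrow> (nat \<Rightarrow> real) \<Rightarrow> nat \<Rightarrow> 'a \<Rightarrow> real" where
  "post_mean k \<sigma> xs ys t x =
     kvec k xs t x \<bullet> (inv_mat (Kmat k xs t + \<sigma>\<^sup>2 \<cdot>\<^sub>m 1\<^sub>m t) *\<^sub>v yvec ys t)"

definition post_var :: "('a \<Rightarrow> 'a \<Rightarrow> real) \<Rightarrow> real \<Rightarrow> (nat \<Rightarrow> 'a) \<Rightarrow> nat \<Rightarrow> 'a \<Rightarrow> real" where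
  "post_var k \<sigma> xs t x = k x x -
     kvec k xs t x \<bullet> (inv_mat (Kmat k xs t + \<sigma>\<^sup>2 \<cdot>\<^sub>m 1\<^sub>m t) *\<^sub>v kvec k xs t x)"

definition info_gain :: "('a \<Rightarrow> 'a \<Rightarrow> real) \<Rightarrow> real \<Rightarrow> 'a set \<Rightarrow> nat \<Rightarrow> real" where
  "info_gain k \<sigma> X T = (SUP xs \<in> {xs :: nat \<Rightarrow> 'a. \<forall>i\<in>{1..T}. xs i \<in> X}.
      1/2 * ln (det (1\<^sub>m T + (1 / \<sigma>\<^sup>2) \<cdot>\<^sub>m Kmat k xs T)))"

end

theory Submission
  imports Defs
begin

text \<open>
  For f in the RKHS, the reproducing property and Cauchy--Schwarz give the confidence bound
  \<open>\<bar>f x - m\<^sub>t(x)\<bar> \<le> \<parallel>f\<parallel> \<sigma>\<^sub>t(x)\<close>: the error is the inner product of f with the residual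
  \<open>k(\<cdot>,x) - \<Sum>\<^sub>i \<beta>\<^sub>i k(\<cdot>,x\<^sub>i)\<close>, whose squared norm is at most \<open>\<sigma>\<^sub>t\<^sup>2(x)\<close>.
  Hence the UCB rule incurs regret at most \<open>2\<parallel>f\<parallel>\<sigma>\<^sub>t(x\<^sub>t\<^sub>+\<^sub>1)\<close> in round t+1, and by
  Cauchy--Schwarz \<open>R\<^sub>T \<le> 2\<parallel>f\<parallel>\<surd>(T \<Sum>\<^sub>t \<sigma>\<^sub>t\<^sup>2(x\<^sub>t\<^sub>+\<^sub>1))\<close>. The Schur complement formula
  factorises \<open>det(K\<^sub>T + \<sigma>\<^sup>2I)\<close> as \<open>\<Prod>\<^sub>t (\<sigma>\<^sup>2 + \<sigma>\<^sub>t\<^sup>2(x\<^sub>t\<^sub>+\<^sub>1))\<close>, and since \<open>\<sigma>\<^sub>t\<^sup>2 \<le> 1\<close>,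
  concavity of the logarithm gives \<open>\<sigma>\<^sub>t\<^sup>2 ln(1 + \<sigma>\<^sup>-\<^sup>2) \<le> ln(1 + \<sigma>\<^sub>t\<^sup>2/\<sigma>\<^sup>2)\<close>, so the sum of
  the variances is at most \<open>2\<gamma>\<^sub>T / ln(1 + \<sigma>\<^sup>-\<^sup>2)\<close>.
  This yields the bounds even without the \<open>2T\<parallel>f\<parallel>\<sigma>\<close> terms.
\<close>

section \<open>Finite kernel combinations\<close>

definition comb_inner :: "('a \<Rightarrow> 'a \<Rightarrow> real) \<Rightarrow> (real \<times> 'a) list \<Rightarrow> (real \<times> 'a) list \<Rightarrow> real" where
  "comb_inner k p q = (\<Sum>i<length p. \<Sum>j<length q. fst (p!i) * fst (q!j) * k (snd (p!i)) (snd (q!j)))"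

definition comb_scale :: "real \<Rightarrow> (real \<times> 'a) list \<Rightarrow> (real \<times> 'a) list" where
  "comb_scale c p = map (\<lambda>(a, x). (c * a, x)) p"

lemma comb_inner_Nil [simp]: "comb_inner k [] q = 0" "comb_inner k p [] = 0"
  by (simp_all add: comb_inner_def)

lemma comb_inner_Cons_left:
  "comb_inner k (a # p) q = (\<Sum>j<length q. fst a * fst (q!j) * k (snd a) (snd (q!j))) + comb_inner k p q"
  unfolding comb_inner_def by (simp only: length_Cons sum.lessThan_Suc_shift) simp

lemma comb_inner_Cons_right:
  "comb_inner k p (a # q) = (\<Sum>i<length p. fst (p!i) * fst a * k (snd (p!i)) (snd a)) + comb_inner k p q"
  unfolding comb_inner_def by (simp only: length_Cons sum.lessThan_Suc_shift) (simp add: sum.distrib)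

lemma comb_inner_append_left: "comb_inner k (p @ q) r = comb_inner k p r + comb_inner k q r"
  by (induction p) (auto simp: comb_inner_Cons_left)

lemma comb_inner_append_right: "comb_inner k r (p @ q) = comb_inner k r p + comb_inner k r q"
  by (induction p) (simp_all add: comb_inner_Cons_right)

lemma comb_inner_scale_left: "comb_inner k (comb_scale c p) q = c * comb_inner k p q"
  unfolding comb_inner_def comb_scale_def by (simp add: sum_distrib_left case_prod_beta mult.assoc)

lemma comb_inner_scale_right: "comb_inner k p (comb_scale c q) = c * comb_inner k p q"
  unfolding comb_inner_def comb_scale_def by (simp add: sum_distrib_left case_prod_beta algebra_simps)

lemma set_comb_scale [simp]: "snd ` set (comb_scale c p) = snd ` set p"
  unfolding comb_scale_def by (force simp: case_prod_beta image_iff)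

lemma pre_norm_sq_eq_comb_inner: "pre_norm_sq k p = comb_inner k p p"
  unfolding pre_norm_sq_def comb_inner_def ..

lemma pre_diff_eq_comb_scale: "pre_diff p q = p @ comb_scale (-1) q"
  unfolding pre_diff_def comb_scale_def by auto

lemma comb_inner_commute:
  assumes "kernel_on k X" "set (map snd p) \<subseteq> X" "set (map snd q) \<subseteq> X"
  shows "comb_inner k p q = comb_inner k q p"
proof -
  have "k (snd (p!i)) (snd (q!j)) = k (snd (q!j)) (snd (p!i))" if "i < length p" "j < length q" for i j
    using assms that unfolding kernel_on_def by (auto dest!: nth_mem simp: subset_iff)
  then show ?thesis unfolding comb_inner_def
    by (subst sum.swap) (auto intro!: sum.cong simp: mult.commute mult.left_commute)
qed

lemma comb_inner_self_nonneg:
  assumes "kernel_on k X" "set (map snd p) \<subseteq> X"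
  shows "comb_inner k p p \<ge> 0"
  using assms unfolding kernel_on_def comb_inner_def by blast

lemma comb_inner_singleton_right:
  assumes "kernel_on k X" "set (map snd p) \<subseteq> X" "x \<in> X"
  shows "comb_inner k p [(1, x)] = pre_eval k p x"
proof -
  have "k (snd (p!i)) x = k x (snd (p!i))" if "i < length p" for i
    using assms that unfolding kernel_on_def by (auto dest!: nth_mem simp: subset_iff)
  then show ?thesis unfolding comb_inner_def pre_eval_def by (auto intro!: sum.cong)
qed

lemma nonneg_quadratic_imp_discriminant_le:
  fixes a b c :: real
  assumes "\<And>l. 0 \<le> a + 2 * b * l + c * l\<^sup>2" "c \<ge> 0"
  shows "b\<^sup>2 \<le> a * c"
proof (cases "c = 0")
  case True
  have "b = 0"
  proof (rule ccontr)
    assume "b \<noteq> 0"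
    have "0 \<le> a + 2 * b * (- (a + 1) / (2 * b)) + c * (- (a + 1) / (2 * b))\<^sup>2" by (rule assms(1))
    with True \<open>b \<noteq> 0\<close> show False by (simp add: field_simps)
  qed
  then show ?thesis using True by simp
next
  case False
  then have c: "c > 0" using assms(2) by simp
  have "0 \<le> a + 2 * b * (- b / c) + c * (- b / c)\<^sup>2" by (rule assms(1))
  also have "\<dots> = a - b\<^sup>2 / c" using c by (simp add: field_simps power2_eq_square)
  finally show ?thesis using c by (simp add: field_simps mult.commute)
qed

lemma comb_inner_Cauchy_Schwarz:
  assumes "kernel_on k X" "set (map snd p) \<subseteq> X" "set (map snd q) \<subseteq> X"
  shows "(comb_inner k p q)\<^sup>2 \<le> comb_inner k p p * comb_inner k q q"
proof (rule nonneg_quadratic_imp_discriminant_le)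
  fix l
  have "0 \<le> comb_inner k (p @ comb_scale l q) (p @ comb_scale l q)"
    by (rule comb_inner_self_nonneg[OF assms(1)]) (use assms in auto)
  also have "\<dots> = comb_inner k p p + 2 * comb_inner k p q * l + comb_inner k q q * l\<^sup>2"
    using comb_inner_commute[OF assms(1) assms(3) assms(2)]
    by (simp add: comb_inner_append_left comb_inner_append_right comb_inner_scale_left
        comb_inner_scale_right power2_eq_square algebra_simps)
  finally show "0 \<le> comb_inner k p p + 2 * comb_inner k p q * l + comb_inner k q q * l\<^sup>2" .
  show "comb_inner k q q \<ge> 0" by (rule comb_inner_self_nonneg[OF assms(1) assms(3)])
qed

lemma abs_sqrt_pre_norm_sq_diff_le:
  assumes "kernel_on k X" "set (map snd p) \<subseteq> X" "set (map snd q) \<subseteq> X"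
  shows "\<bar>sqrt (pre_norm_sq k p) - sqrt (pre_norm_sq k q)\<bar> \<le> sqrt (pre_norm_sq k (pre_diff p q))"
proof -
  define a b c where "a = comb_inner k p p" "b = comb_inner k q q" "c = comb_inner k p q"
  have ab: "a \<ge> 0" "b \<ge> 0" unfolding a_b_c_def using comb_inner_self_nonneg assms by blast+
  have "c\<^sup>2 \<le> a * b" unfolding a_b_c_def by (rule comb_inner_Cauchy_Schwarz[OF assms])
  then have "c \<le> sqrt a * sqrt b"
    using ab by (metis abs_ge_self order_trans real_sqrt_abs real_sqrt_le_mono real_sqrt_mult)
  moreover have "pre_norm_sq k (pre_diff p q) = a - 2 * c + b"
    unfolding pre_diff_eq_comb_scale pre_norm_sq_eq_comb_inner a_b_c_def
    using comb_inner_commute[OF assms(1) assms(3) assms(2)]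
    by (simp add: comb_inner_append_left comb_inner_append_right comb_inner_scale_left comb_inner_scale_right)
  moreover have "(sqrt a - sqrt b)\<^sup>2 = a - 2 * (sqrt a * sqrt b) + b"
    using ab by (simp add: power2_diff)
  ultimately have "(sqrt a - sqrt b)\<^sup>2 \<le> pre_norm_sq k (pre_diff p q)" by simp
  then have "sqrt ((sqrt a - sqrt b)\<^sup>2) \<le> sqrt (pre_norm_sq k (pre_diff p q))"
    by (rule real_sqrt_le_mono)
  then show ?thesis unfolding pre_norm_sq_eq_comb_inner a_b_c_def by simp
qed

lemma rkhs_approx_norm_tendsto:
  assumes ker: "kernel_on k X" and f: "in_rkhs k X f"
  defines "s \<equiv> SOME s. rkhs_approx k X f s"
  shows "rkhs_approx k X f s" and "(\<lambda>n. sqrt (pre_norm_sq k (s n))) \<longlonglongrightarrow> rkhs_norm k X f"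
proof -
  show s: "rkhs_approx k X f s" unfolding s_def using f unfolding in_rkhs_def by (rule someI_ex)
  define a where "a = (\<lambda>n. sqrt (pre_norm_sq k (s n)))"
  have sub: "set (map snd (s n)) \<subseteq> X" for n using s unfolding rkhs_approx_def by blast
  have "Cauchy a"
  proof (rule metric_CauchyI)
    fix e :: real assume e: "e > 0"
    then obtain N where N: "\<forall>m\<ge>N. \<forall>n\<ge>N. pre_norm_sq k (pre_diff (s m) (s n)) < e\<^sup>2"
      using s unfolding rkhs_approx_def by (meson zero_less_power)
    have "dist (a m) (a n) < e" if "m \<ge> N" "n \<ge> N" for m n
    proof -
      have "dist (a m) (a n) \<le> sqrt (pre_norm_sq k (pre_diff (s m) (s n)))"
        unfolding dist_real_def a_def by (rule abs_sqrt_pre_norm_sq_diff_le[OF ker sub sub])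
      also have "\<dots> < sqrt (e\<^sup>2)" using N that by (intro real_sqrt_less_mono) blast
      finally show ?thesis using e by simp
    qed
    then show "\<exists>M. \<forall>m\<ge>M. \<forall>n\<ge>M. dist (a m) (a n) < e" by blast
  qed
  then have "a \<longlonglongrightarrow> lim a" by (rule Cauchy_convergent[THEN convergent_LIMSEQ_iff[THEN iffD1]])
  then show "(\<lambda>n. sqrt (pre_norm_sq k (s n))) \<longlonglongrightarrow> rkhs_norm k X f"
    unfolding rkhs_norm_def a_def s_def .
qed

lemma rkhs_norm_nonneg:
  assumes "kernel_on k X" "in_rkhs k X f"
  shows "rkhs_norm k X f \<ge> 0"
proof (rule LIMSEQ_le_const[OF rkhs_approx_norm_tendsto(2)[OF assms]], intro exI allI impI)
  fix n
  have "set (map snd ((SOME s. rkhs_approx k X f s) n)) \<subseteq> X"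
    using rkhs_approx_norm_tendsto(1)[OF assms] unfolding rkhs_approx_def by blast
  then show "0 \<le> sqrt (pre_norm_sq k ((SOME s. rkhs_approx k X f s) n))"
    unfolding pre_norm_sq_eq_comb_inner using comb_inner_self_nonneg[OF assms(1)] by simp
qed

section \<open>Posterior mean and variance\<close>

definition reg_gram_mat :: "('a \<Rightarrow> 'a \<Rightarrow> real) \<Rightarrow> real \<Rightarrow> (nat \<Rightarrow> 'a) \<Rightarrow> nat \<Rightarrow> real mat" where
  "reg_gram_mat k \<sigma> xs t = Kmat k xs t + \<sigma>\<^sup>2 \<cdot>\<^sub>m 1\<^sub>m t"

definition post_weights :: "('a \<Rightarrow> 'a \<Rightarrow> real) \<Rightarrow> real \<Rightarrow> (nat \<Rightarrow> 'a) \<Rightarrow> nat \<Rightarrow> 'a \<Rightarrow> real vec" where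
  "post_weights k \<sigma> xs t x = inv_mat (reg_gram_mat k \<sigma> xs t) *\<^sub>v kvec k xs t x"

definition vec_comb :: "(nat \<Rightarrow> 'a) \<Rightarrow> nat \<Rightarrow> real vec \<Rightarrow> (real \<times> 'a) list" where
  "vec_comb xs t v = map (\<lambda>i. (v $ i, xs (Suc i))) [0..<t]"

definition residual_comb :: "('a \<Rightarrow> 'a \<Rightarrow> real) \<Rightarrow> real \<Rightarrow> (nat \<Rightarrow> 'a) \<Rightarrow> nat \<Rightarrow> 'a \<Rightarrow> (real \<times> 'a) list" where
  "residual_comb k \<sigma> xs t x = [(1, x)] @ comb_scale (-1) (vec_comb xs t (post_weights k \<sigma> xs t x))"

lemma Kmat_carrier [simp]: "Kmat k xs t \<in> carrier_mat t t"
  by (simp add: Kmat_def)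

lemma reg_gram_mat_carrier [simp]: "reg_gram_mat k \<sigma> xs t \<in> carrier_mat t t"
  by (simp add: reg_gram_mat_def)

lemma kvec_carrier [simp]: "kvec k xs t x \<in> carrier_vec t"
  by (simp add: kvec_def)

lemma scalar_prod_yvec: "b \<bullet> yvec ys t = (\<Sum>j<t. b $ j * ys (Suc j))"
  by (simp add: scalar_prod_def yvec_def atLeast0LessThan)

lemma set_vec_comb: "\<forall>i\<in>{1..t}. xs i \<in> X \<Longrightarrow> set (map snd (vec_comb xs t v)) \<subseteq> X"
  by (auto simp: vec_comb_def)

lemma comb_inner_vec_comb:
  assumes "v \<in> carrier_vec t" "w \<in> carrier_vec t"
  shows "comb_inner k (vec_comb xs t v) (vec_comb xs t w) = v \<bullet> (Kmat k xs t *\<^sub>v w)"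
  using assms by (simp add: comb_inner_def vec_comb_def scalar_prod_def atLeast0LessThan Kmat_def
      Matrix.row_def sum_distrib_left algebra_simps)

lemma comb_inner_singleton_vec_comb:
  assumes "w \<in> carrier_vec t"
  shows "comb_inner k [(1, x)] (vec_comb xs t w) = w \<bullet> kvec k xs t x"
  using assms by (simp add: comb_inner_def vec_comb_def kvec_def scalar_prod_def atLeast0LessThan mult.commute)

lemma scalar_prod_self_pos:
  assumes "(v :: real vec) \<in> carrier_vec t" "v \<noteq> 0\<^sub>v t"
  shows "v \<bullet> (v :: real vec) > 0"
proof -
  have "\<exists>i<t. v $ i \<noteq> 0"
  proof (rule ccontr)
    assume "\<not> (\<exists>i<t. v $ i \<noteq> 0)"
    then have "v = 0\<^sub>v t" using assms(1) by (intro eq_vecI) auto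
    with assms(2) show False by simp
  qed
  then obtain i where i: "i < t" "v $ i \<noteq> 0" by blast
  have "0 < v $ i * v $ i" using i(2) by (simp add: not_square_less_zero less_le)
  also have "\<dots> \<le> (\<Sum>j\<in>{0..<t}. v $ j * v $ j)"
    by (rule member_le_sum) (use i in auto)
  finally show ?thesis using assms(1) by (simp add: scalar_prod_def)
qed

lemma scalar_prod_reg_gram_mat:
  assumes "v \<in> carrier_vec t" "w \<in> carrier_vec t"
  shows "v \<bullet> (reg_gram_mat k \<sigma> xs t *\<^sub>v w) = v \<bullet> (Kmat k xs t *\<^sub>v w) + \<sigma>\<^sup>2 * (v \<bullet> w)"
proof -
  have Kw: "Kmat k xs t *\<^sub>v w \<in> carrier_vec t" by (rule mult_mat_vec_carrier[OF Kmat_carrier assms(2)])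
  have "(\<sigma>\<^sup>2 \<cdot>\<^sub>m 1\<^sub>m t) *\<^sub>v w = \<sigma>\<^sup>2 \<cdot>\<^sub>v w"
    using assms(2) by (intro eq_vecI) (auto simp: row_smult)
  moreover have "v \<bullet> (Kmat k xs t *\<^sub>v w + \<sigma>\<^sup>2 \<cdot>\<^sub>v w) = v \<bullet> (Kmat k xs t *\<^sub>v w) + v \<bullet> (\<sigma>\<^sup>2 \<cdot>\<^sub>v w)"
    by (rule scalar_prod_add_distrib[OF assms(1) Kw]) (use assms(2) in simp)
  ultimately show ?thesis
    using assms unfolding reg_gram_mat_def by (simp add: add_mult_distrib_mat_vec[OF Kmat_carrier _ assms(2)])
qed

context
  fixes k :: "'a \<Rightarrow> 'a \<Rightarrow> real" and X :: "'a set" and \<sigma> :: real and xs :: "nat \<Rightarrow> 'a" and t :: nat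
  assumes ker: "kernel_on k X" and sig: "\<sigma> > 0" and pts: "\<forall>i\<in>{1..t}. xs i \<in> X"
begin

lemma reg_gram_mat_pos_def:
  assumes "v \<in> carrier_vec t" "v \<noteq> 0\<^sub>v t"
  shows "v \<bullet> (reg_gram_mat k \<sigma> xs t *\<^sub>v v) > 0"
proof -
  have "comb_inner k (vec_comb xs t v) (vec_comb xs t v) \<ge> 0"
    by (rule comb_inner_self_nonneg[OF ker set_vec_comb[OF pts]])
  moreover have "\<sigma>\<^sup>2 * (v \<bullet> v) > 0" using sig scalar_prod_self_pos[OF assms] by simp
  ultimately show ?thesis
    using assms(1) by (simp add: scalar_prod_reg_gram_mat comb_inner_vec_comb)
qed

lemma reg_gram_mat_pos_semidef:
  assumes "v \<in> carrier_vec t"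
  shows "v \<bullet> (reg_gram_mat k \<sigma> xs t *\<^sub>v v) \<ge> 0"
proof (cases "v = 0\<^sub>v t")
  case True
  have "reg_gram_mat k \<sigma> xs t *\<^sub>v 0\<^sub>v t \<in> carrier_vec t"
    by (rule mult_mat_vec_carrier[OF reg_gram_mat_carrier zero_carrier_vec])
  then show ?thesis using True by simp
next
  case False
  then show ?thesis using reg_gram_mat_pos_def[OF assms] by simp
qed

lemma inv_mat_reg_gram_mat:
  "inv_mat (reg_gram_mat k \<sigma> xs t) \<in> carrier_mat t t \<and>
   reg_gram_mat k \<sigma> xs t * inv_mat (reg_gram_mat k \<sigma> xs t) = 1\<^sub>m t \<and>
   inv_mat (reg_gram_mat k \<sigma> xs t) * reg_gram_mat k \<sigma> xs t = 1\<^sub>m t"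
proof -
  let ?A = "reg_gram_mat k \<sigma> xs t"
  have "det ?A \<noteq> 0"
  proof
    assume "det ?A = 0"
    then obtain v where "v \<in> carrier_vec t" "v \<noteq> 0\<^sub>v t" "?A *\<^sub>v v = 0\<^sub>v t"
      using det_0_iff_vec_prod_zero_field[OF reg_gram_mat_carrier] by blast
    with reg_gram_mat_pos_def show False by fastforce
  qed
  then have "?A \<in> Units (ring_mat TYPE(real) t undefined)"
    by (rule det_non_zero_imp_unit[OF reg_gram_mat_carrier])
  then have "\<exists>B. B \<in> carrier_mat t t \<and> ?A * B = 1\<^sub>m t \<and> B * ?A = 1\<^sub>m t"
    unfolding Units_def ring_mat_def by auto
  moreover have "dim_row ?A = t" using carrier_matD(1)[OF reg_gram_mat_carrier] .
  ultimately show ?thesis unfolding inv_mat_def by (simp only:) (rule someI_ex)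
qed

lemma inv_reg_gram_mat_carrier [simp]: "inv_mat (reg_gram_mat k \<sigma> xs t) \<in> carrier_mat t t"
  using inv_mat_reg_gram_mat by blast

lemma post_weights_carrier [simp]: "post_weights k \<sigma> xs t x \<in> carrier_vec t"
  unfolding post_weights_def by (rule mult_mat_vec_carrier[OF inv_reg_gram_mat_carrier kvec_carrier])

lemma transpose_inv_reg_gram_mat:
  "transpose_mat (inv_mat (reg_gram_mat k \<sigma> xs t)) = inv_mat (reg_gram_mat k \<sigma> xs t)"
proof -
  let ?A = "reg_gram_mat k \<sigma> xs t" and ?B = "inv_mat (reg_gram_mat k \<sigma> xs t)"
  have B: "?B \<in> carrier_mat t t" "?A * ?B = 1\<^sub>m t" "?B * ?A = 1\<^sub>m t"
    using inv_mat_reg_gram_mat by auto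
  have "k (xs (Suc j)) (xs (Suc i)) = k (xs (Suc i)) (xs (Suc j))" if "i < t" "j < t" for i j
    using ker pts that unfolding kernel_on_def by auto
  then have "transpose_mat ?A = ?A"
    by (intro eq_matI) (auto simp: reg_gram_mat_def Kmat_def)
  then have r: "?A * transpose_mat ?B = 1\<^sub>m t"
    using transpose_mult[OF B(1) reg_gram_mat_carrier[of k \<sigma> xs t]] B(3) by simp
  have "transpose_mat ?B = (?B * ?A) * transpose_mat ?B"
    using B left_mult_one_mat[of "transpose_mat ?B" t t] by simp
  also have "\<dots> = ?B * (?A * transpose_mat ?B)"
    using B by (intro assoc_mult_mat[of _ t t _ t _ t]) auto
  finally show ?thesis using r B by simp
qed

lemma post_mean_eq: "post_mean k \<sigma> xs ys t x = post_weights k \<sigma> xs t x \<bullet> yvec ys t"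
proof -
  have "yvec ys t \<in> carrier_vec t" by (simp add: yvec_def)
  from transpose_vec_mult_scalar[OF inv_reg_gram_mat_carrier this kvec_carrier[of k xs t x]]
  show ?thesis
    unfolding post_mean_def reg_gram_mat_def[symmetric] transpose_inv_reg_gram_mat
      post_weights_def[symmetric] by simp
qed

lemma post_var_eq: "post_var k \<sigma> xs t x = k x x - post_weights k \<sigma> xs t x \<bullet> kvec k xs t x"
  using comm_scalar_prod[OF kvec_carrier[of k xs t x] post_weights_carrier[of x]]
  unfolding post_var_def reg_gram_mat_def[symmetric] post_weights_def[symmetric] by simp

lemma reg_gram_mat_post_weights: "reg_gram_mat k \<sigma> xs t *\<^sub>v post_weights k \<sigma> xs t x = kvec k xs t x"
  using assoc_mult_mat_vec[OF reg_gram_mat_carrier[of k \<sigma> xs t] inv_reg_gram_mat_carrier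
      kvec_carrier[of k xs t x]] inv_mat_reg_gram_mat
  unfolding post_weights_def by simp

lemma post_var_le: "post_var k \<sigma> xs t x \<le> k x x"
  using reg_gram_mat_pos_semidef[OF post_weights_carrier, of x]
  unfolding post_var_eq reg_gram_mat_post_weights by simp

lemma residual_comb_norm_le:
  assumes "x \<in> X"
  shows "comb_inner k (residual_comb k \<sigma> xs t x) (residual_comb k \<sigma> xs t x) \<le> post_var k \<sigma> xs t x"
proof -
  define b where "b = post_weights k \<sigma> xs t x"
  define g where "g = vec_comb xs t b"
  have b: "b \<in> carrier_vec t" unfolding b_def by simp
  have g: "set (map snd g) \<subseteq> X" unfolding g_def by (rule set_vec_comb[OF pts])
  have e1: "comb_inner k [(1, x)] [(1, x)] = k x x" by (simp add: comb_inner_def)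
  have e2: "comb_inner k [(1, x)] g = b \<bullet> kvec k xs t x"
    unfolding g_def by (rule comb_inner_singleton_vec_comb[OF b])
  have e3: "comb_inner k g [(1, x)] = comb_inner k [(1, x)] g"
    by (rule comb_inner_commute[OF ker g]) (use assms in simp)
  have "comb_inner k g g = b \<bullet> (reg_gram_mat k \<sigma> xs t *\<^sub>v b) - \<sigma>\<^sup>2 * (b \<bullet> b)"
    unfolding g_def comb_inner_vec_comb[OF b b] scalar_prod_reg_gram_mat[OF b b] by simp
  also have "b \<bullet> (reg_gram_mat k \<sigma> xs t *\<^sub>v b) = b \<bullet> kvec k xs t x"
    unfolding b_def reg_gram_mat_post_weights ..
  finally have e4: "comb_inner k g g = b \<bullet> kvec k xs t x - \<sigma>\<^sup>2 * (b \<bullet> b)" .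
  have "comb_inner k (residual_comb k \<sigma> xs t x) (residual_comb k \<sigma> xs t x)
      = k x x - b \<bullet> kvec k xs t x - \<sigma>\<^sup>2 * (b \<bullet> b)"
    using e1 e2 e3 e4
    unfolding residual_comb_def b_def[symmetric] g_def[symmetric]
    by (simp only: comb_inner_append_left comb_inner_append_right comb_inner_scale_left
        comb_inner_scale_right) simp
  also have "\<dots> \<le> k x x - b \<bullet> kvec k xs t x"
    using sig by (simp add: scalar_prod_def sum_nonneg)
  finally show ?thesis unfolding post_var_eq b_def .
qed

lemma set_residual_comb: "x \<in> X \<Longrightarrow> set (map snd (residual_comb k \<sigma> xs t x)) \<subseteq> X"
  using set_vec_comb[OF pts] unfolding residual_comb_def by auto

lemma post_var_nonneg: "x \<in> X \<Longrightarrow> post_var k \<sigma> xs t x \<ge> 0"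
  using residual_comb_norm_le comb_inner_self_nonneg[OF ker set_residual_comb] by fastforce

lemma comb_inner_residual_comb:
  assumes x: "x \<in> X" and p: "set (map snd p) \<subseteq> X"
  shows "comb_inner k p (residual_comb k \<sigma> xs t x)
       = pre_eval k p x - post_mean k \<sigma> xs (\<lambda>i. pre_eval k p (xs i)) t x"
proof -
  define b where "b = post_weights k \<sigma> xs t x"
  define g where "g = vec_comb xs t b"
  have "comb_inner k p g = comb_inner k g p"
    unfolding g_def by (rule comb_inner_commute[OF ker p set_vec_comb[OF pts]])
  also have "\<dots> = b \<bullet> yvec (\<lambda>i. pre_eval k p (xs i)) t"
    unfolding comb_inner_def g_def vec_comb_def pre_eval_def scalar_prod_yvec
    by (simp add: sum_distrib_left mult.assoc)
  finally show ?thesis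
    unfolding residual_comb_def post_mean_eq b_def[symmetric] g_def[symmetric]
    by (simp only: comb_inner_append_right comb_inner_scale_right
        comb_inner_singleton_right[OF ker p x])
qed

lemma pre_eval_confidence:
  assumes x: "x \<in> X" and p: "set (map snd p) \<subseteq> X"
  shows "\<bar>pre_eval k p x - post_mean k \<sigma> xs (\<lambda>i. pre_eval k p (xs i)) t x\<bar>
     \<le> sqrt (pre_norm_sq k p) * sqrt (post_var k \<sigma> xs t x)"
proof -
  let ?r = "residual_comb k \<sigma> xs t x"
  have "(comb_inner k p ?r)\<^sup>2 \<le> comb_inner k p p * comb_inner k ?r ?r"
    by (rule comb_inner_Cauchy_Schwarz[OF ker p set_residual_comb[OF x]])
  also have "\<dots> \<le> comb_inner k p p * post_var k \<sigma> xs t x"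
    by (rule mult_left_mono[OF residual_comb_norm_le[OF x] comb_inner_self_nonneg[OF ker p]])
  finally show ?thesis
    using real_sqrt_le_mono
    unfolding comb_inner_residual_comb[OF x p] pre_norm_sq_eq_comb_inner
    by (fastforce simp: real_sqrt_mult)
qed

end

text \<open>The confidence bound passes to the limit along the approximating sequence of f,
  because the posterior mean is linear in the observations.\<close>
lemma rkhs_confidence:
  assumes ker: "kernel_on k X" and sig: "\<sigma> > 0" and pts: "\<forall>i\<in>{1..t}. xs i \<in> X"
    and f: "in_rkhs k X f" and x: "x \<in> X"
  shows "\<bar>f x - post_mean k \<sigma> xs (\<lambda>i. f (xs i)) t x\<bar> \<le> rkhs_norm k X f * sqrt (post_var k \<sigma> xs t x)"
proof -
  define s where "s = (SOME s. rkhs_approx k X f s)"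
  have s: "rkhs_approx k X f s" and lim: "(\<lambda>n. sqrt (pre_norm_sq k (s n))) \<longlonglongrightarrow> rkhs_norm k X f"
    using rkhs_approx_norm_tendsto[OF ker f] unfolding s_def by auto
  have sub: "set (map snd (s n)) \<subseteq> X" for n using s unfolding rkhs_approx_def by blast
  have pt: "\<And>y. y \<in> X \<Longrightarrow> (\<lambda>n. pre_eval k (s n) y) \<longlonglongrightarrow> f y" using s unfolding rkhs_approx_def by blast
  define b where "b = post_weights k \<sigma> xs t x"
  have pm: "post_mean k \<sigma> xs ys t x = (\<Sum>j<t. b $ j * ys (Suc j))" for ys
    unfolding post_mean_eq[OF ker sig pts] b_def scalar_prod_yvec ..
  have "(\<lambda>n. \<bar>pre_eval k (s n) x - post_mean k \<sigma> xs (\<lambda>i. pre_eval k (s n) (xs i)) t x\<bar>)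
       \<longlonglongrightarrow> \<bar>f x - post_mean k \<sigma> xs (\<lambda>i. f (xs i)) t x\<bar>"
    unfolding pm by (intro tendsto_rabs tendsto_diff tendsto_sum tendsto_mult_left pt) (use pts x in auto)
  moreover have "(\<lambda>n. sqrt (pre_norm_sq k (s n)) * sqrt (post_var k \<sigma> xs t x))
       \<longlonglongrightarrow> rkhs_norm k X f * sqrt (post_var k \<sigma> xs t x)"
    by (intro tendsto_mult_right lim)
  ultimately show ?thesis
    using pre_eval_confidence[OF ker sig pts x sub] by (intro LIMSEQ_le) auto
qed

section \<open>Information gain\<close>

lemma det_four_block_mat_Schur:
  fixes A :: "'a :: field mat"
  assumes A: "A \<in> carrier_mat n n" and Ai: "Ai \<in> carrier_mat n n" "Ai * A = 1\<^sub>m n"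
    and B: "B \<in> carrier_mat n m" and C: "C \<in> carrier_mat m n" and D: "D \<in> carrier_mat m m"
  shows "det (four_block_mat A B C D) = det A * det (D - C * Ai * B)"
proof -
  have CAi: "C * Ai \<in> carrier_mat m n" using C Ai by auto
  define L where "L = four_block_mat (1\<^sub>m n) (0\<^sub>m n m) (- (C * Ai)) (1\<^sub>m m)"
  have L: "L \<in> carrier_mat (n + m) (n + m)" unfolding L_def using CAi by auto
  have "det L = 1" unfolding L_def
    by (subst det_four_block_mat_upper_right_zero[of _ n _ m]) (use CAi in auto)
  have "C * Ai * A = C" using A Ai C by (simp add: assoc_mult_mat[of C m n Ai n A n])
  then have "- (C * Ai) * A = - C"
    using CAi A by (subst uminus_mult_left_mat) auto
  then have lower_left: "- (C * Ai) * A + 1\<^sub>m m * C = 0\<^sub>m m n"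
    using C by simp
  have "- (C * Ai) * B = - (C * Ai * B)"
    using CAi B by (subst uminus_mult_left_mat) auto
  then have lower_right: "- (C * Ai) * B + 1\<^sub>m m * D = D - C * Ai * B"
    using CAi B D by (simp add: minus_add_uminus_mat[of _ m m] comm_add_mat[of _ m m])
  have S: "D - C * Ai * B \<in> carrier_mat m m"
    by (rule minus_carrier_mat[OF mult_carrier_mat[OF CAi B]])
  have "L * four_block_mat A B C D = four_block_mat A B (0\<^sub>m m n) (D - C * Ai * B)"
    unfolding L_def mult_four_block_mat[OF one_carrier_mat zero_carrier_mat uminus_carrier_mat[OF CAi]
        one_carrier_mat A B C D] lower_left lower_right
    using A B C D by simp
  then have "det L * det (four_block_mat A B C D) = det A * det (D - C * Ai * B)"
    using det_mult[OF L four_block_carrier_mat[OF A D, of B C]]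
      det_four_block_mat_lower_left_zero[OF A B refl S] by simp
  with \<open>det L = 1\<close> show ?thesis by simp
qed

lemma index_row_mat_mult_col_mat:
  fixes M :: "'a :: comm_semiring_0 mat"
  assumes "M \<in> carrier_mat n n" "u \<in> carrier_vec n" "w \<in> carrier_vec n"
  shows "(mat 1 n (\<lambda>(_, j). u $ j) * M * mat n 1 (\<lambda>(i, _). w $ i)) $$ (0, 0) = u \<bullet> (M *\<^sub>v w)"
proof -
  let ?R = "mat 1 n (\<lambda>(_, j). u $ j)" and ?C = "mat n 1 (\<lambda>(i, _). w $ i)"
  have "row ?R 0 = u" "col ?C 0 = w" using assms by (auto intro!: eq_vecI)
  moreover have "?R * M * ?C = ?R * (M * ?C)" using assms by (intro assoc_mult_mat) auto
  moreover have "col (M * ?C) 0 = M *\<^sub>v col ?C 0" using assms by (intro col_mult2) auto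
  ultimately show ?thesis using assms by (simp add: index_mult_mat)
qed
lemma det_reg_gram_mat_Suc:
  assumes ker: "kernel_on k X" and sig: "\<sigma> > 0" and pts: "\<forall>i\<in>{1..Suc t}. xs i \<in> X"
  shows "det (reg_gram_mat k \<sigma> xs (Suc t))
       = det (reg_gram_mat k \<sigma> xs t) * (\<sigma>\<^sup>2 + post_var k \<sigma> xs t (xs (Suc t)))"
proof -
  have pts': "\<forall>i\<in>{1..t}. xs i \<in> X" using pts by auto
  define x where "x = xs (Suc t)"
  define A Ai kv where "A = reg_gram_mat k \<sigma> xs t" "Ai = inv_mat A" "kv = kvec k xs t x"
  define B C D where "B = mat t 1 (\<lambda>(i, _). kv $ i)" "C = mat 1 t (\<lambda>(_, j). kv $ j)"
    "D = mat 1 1 (\<lambda>_. k x x + \<sigma>\<^sup>2)"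
  have A: "A \<in> carrier_mat t t" and Ai: "Ai \<in> carrier_mat t t" "Ai * A = 1\<^sub>m t"
    using inv_mat_reg_gram_mat[OF ker sig pts'] unfolding A_Ai_kv_def by auto
  have kv: "kv \<in> carrier_vec t" unfolding A_Ai_kv_def by simp
  have B: "B \<in> carrier_mat t 1" and C: "C \<in> carrier_mat 1 t" and D: "D \<in> carrier_mat 1 1"
    by (auto simp: B_C_D_def)
  have symk: "k (xs (Suc i)) x = k x (xs (Suc i))" if "i < t" for i
    using ker pts that unfolding kernel_on_def x_def by auto
  have "reg_gram_mat k \<sigma> xs (Suc t) = four_block_mat A B C D"
  proof (rule eq_matI)
    fix i j assume "i < dim_row (four_block_mat A B C D)" "j < dim_col (four_block_mat A B C D)"
    then have "i < Suc t" "j < Suc t" using A D by auto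
    then show "reg_gram_mat k \<sigma> xs (Suc t) $$ (i, j) = four_block_mat A B C D $$ (i, j)"
      using symk unfolding A_Ai_kv_def B_C_D_def reg_gram_mat_def Kmat_def kvec_def x_def
      by (auto simp: less_Suc_eq)
  qed (use A D in \<open>auto simp: reg_gram_mat_def Kmat_def\<close>)
  moreover have "(C * Ai * B) $$ (0, 0) = kv \<bullet> (Ai *\<^sub>v kv)"
    unfolding B_C_D_def by (rule index_row_mat_mult_col_mat[OF Ai(1) kv kv])
  then have "(D - C * Ai * B) $$ (0, 0) = \<sigma>\<^sup>2 + post_var k \<sigma> xs t x"
    using mult_carrier_mat[OF mult_carrier_mat[OF C Ai(1)] B]
    unfolding post_var_def A_Ai_kv_def reg_gram_mat_def[symmetric] B_C_D_def by simp
  moreover have "D - C * Ai * B \<in> carrier_mat 1 1"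
    by (rule minus_carrier_mat[OF mult_carrier_mat[OF mult_carrier_mat[OF C Ai(1)] B]])
  ultimately show ?thesis
    using det_four_block_mat_Schur[OF A Ai B C D] det_single unfolding A_Ai_kv_def x_def by metis
qed

lemma det_reg_gram_mat:
  assumes "kernel_on k X" "\<sigma> > 0" "\<forall>i\<in>{1..T}. xs i \<in> X"
  shows "det (reg_gram_mat k \<sigma> xs T) = (\<Prod>t<T. \<sigma>\<^sup>2 + post_var k \<sigma> xs t (xs (Suc t)))"
  using assms(3)
proof (induction T)
  case 0
  have "reg_gram_mat k \<sigma> xs 0 = 1\<^sub>m 0" by (rule eq_matI) (auto simp: reg_gram_mat_def Kmat_def)
  then show ?case by simp
next
  case (Suc T)
  then show ?case using det_reg_gram_mat_Suc[OF assms(1,2) Suc.prems] by simp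
qed

lemma post_var_next_bounds:
  assumes "kernel_on k X" "\<sigma> > 0" "\<forall>i\<in>{1..Suc t}. xs i \<in> X" "\<forall>x\<in>X. \<forall>y\<in>X. k x y \<le> 1"
  shows "0 \<le> post_var k \<sigma> xs t (xs (Suc t))" "post_var k \<sigma> xs t (xs (Suc t)) \<le> 1"
proof -
  have pts: "\<forall>i\<in>{1..t}. xs i \<in> X" and x: "xs (Suc t) \<in> X" using assms(3) by auto
  show "0 \<le> post_var k \<sigma> xs t (xs (Suc t))" by (rule post_var_nonneg[OF assms(1,2) pts x])
  have "post_var k \<sigma> xs t (xs (Suc t)) \<le> k (xs (Suc t)) (xs (Suc t))"
    by (rule post_var_le[OF assms(1,2) pts])
  also have "\<dots> \<le> 1" using assms(4) x by blast
  finally show "post_var k \<sigma> xs t (xs (Suc t)) \<le> 1" .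
qed

lemma ln_det_eq_sum_ln_post_var:
  assumes ker: "kernel_on k X" and sig: "\<sigma> > 0" and pts: "\<forall>i\<in>{1..T}. xs i \<in> X"
  shows "ln (det (1\<^sub>m T + (1 / \<sigma>\<^sup>2) \<cdot>\<^sub>m Kmat k xs T))
       = (\<Sum>t<T. ln (1 + post_var k \<sigma> xs t (xs (Suc t)) / \<sigma>\<^sup>2))"
proof -
  define v where "v t = post_var k \<sigma> xs t (xs (Suc t))" for t
  have s2: "\<sigma>\<^sup>2 > 0" using sig by simp
  have scaled: "1\<^sub>m T + (1 / \<sigma>\<^sup>2) \<cdot>\<^sub>m Kmat k xs T = (1 / \<sigma>\<^sup>2) \<cdot>\<^sub>m reg_gram_mat k \<sigma> xs T"
    by (rule eq_matI) (use s2 in \<open>auto simp: reg_gram_mat_def Kmat_def field_simps\<close>)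
  have "det (1\<^sub>m T + (1 / \<sigma>\<^sup>2) \<cdot>\<^sub>m Kmat k xs T) = (1 / \<sigma>\<^sup>2) ^ T * (\<Prod>t<T. \<sigma>\<^sup>2 + v t)"
    unfolding scaled det_smult det_reg_gram_mat[OF ker sig pts] v_def
    by (simp add: carrier_matD(2)[OF reg_gram_mat_carrier])
  also have "\<dots> = (\<Prod>t<T. 1 / \<sigma>\<^sup>2 * (\<sigma>\<^sup>2 + v t))"
    by (simp only: prod.distrib prod_constant card_lessThan)
  also have "\<dots> = (\<Prod>t<T. 1 + v t / \<sigma>\<^sup>2)"
    by (rule prod.cong) (use s2 in \<open>auto simp: field_simps\<close>)
  finally have det: "det (1\<^sub>m T + (1 / \<sigma>\<^sup>2) \<cdot>\<^sub>m Kmat k xs T) = (\<Prod>t<T. 1 + v t / \<sigma>\<^sup>2)" .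
  have "0 \<le> v t" if "t < T" for t
    unfolding v_def using pts that by (intro post_var_nonneg[OF ker sig]) auto
  then have "0 < 1 + v t / \<sigma>\<^sup>2" if "t \<in> {..<T}" for t
    using that s2 by (simp add: add_pos_nonneg)
  then show ?thesis unfolding det v_def[symmetric] by (intro ln_prod) (auto simp: less_le)
qed

lemma mult_ln_one_plus_le:
  fixes s a :: real
  assumes "0 \<le> s" "s \<le> 1" "a > 0"
  shows "s * ln (1 + a) \<le> ln (1 + a * s)"
proof -
  have "(1 + a) powr s * 1 powr (1 - s) \<le> s * (1 + a) + (1 - s) * 1"
    by (rule Youngs_inequality_0) (use assms in auto)
  then have "(1 + a) powr s \<le> 1 + a * s" by (simp add: algebra_simps)
  moreover have "0 < 1 + a * s" using assms by (intro add_pos_nonneg) auto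
  ultimately have "ln ((1 + a) powr s) \<le> ln (1 + a * s)"
    using assms by (subst ln_le_cancel_iff) auto
  then show ?thesis using assms by (simp add: ln_powr)
qed

lemma ln_det_le_info_gain:
  assumes ker: "kernel_on k X" and sig: "\<sigma> > 0" and pts: "\<forall>i\<in>{1..T}. xs i \<in> X"
    and k1: "\<forall>x\<in>X. \<forall>y\<in>X. k x y \<le> 1"
  shows "1/2 * ln (det (1\<^sub>m T + (1 / \<sigma>\<^sup>2) \<cdot>\<^sub>m Kmat k xs T)) \<le> info_gain k \<sigma> X T"
proof -
  let ?g = "\<lambda>xs. 1/2 * ln (det (1\<^sub>m T + (1 / \<sigma>\<^sup>2) \<cdot>\<^sub>m Kmat k xs T))"
  have "?g ys \<le> T / 2 * ln (1 + 1 / \<sigma>\<^sup>2)" if "ys \<in> {xs. \<forall>i\<in>{1..T}. xs i \<in> X}" for ys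
  proof -
    have ys: "\<forall>i\<in>{1..T}. ys i \<in> X" using that by simp
    have "ln (1 + post_var k \<sigma> ys t (ys (Suc t)) / \<sigma>\<^sup>2) \<le> ln (1 + 1 / \<sigma>\<^sup>2)" if "t \<in> {..<T}" for t
    proof -
      have "\<forall>i\<in>{1..Suc t}. ys i \<in> X" using ys that by auto
      note b = post_var_next_bounds[OF ker sig this k1]
      then have "post_var k \<sigma> ys t (ys (Suc t)) / \<sigma>\<^sup>2 \<le> 1 / \<sigma>\<^sup>2"
        by (simp add: divide_right_mono)
      with b sig show ?thesis by (subst ln_le_cancel_iff) (auto intro: add_pos_nonneg)
    qed
    then have "(\<Sum>t<T. ln (1 + post_var k \<sigma> ys t (ys (Suc t)) / \<sigma>\<^sup>2)) \<le> (\<Sum>t<T. ln (1 + 1 / \<sigma>\<^sup>2))"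
      by (rule sum_mono)
    then show ?thesis unfolding ln_det_eq_sum_ln_post_var[OF ker sig ys] by simp
  qed
  then have "bdd_above (?g ` {xs. \<forall>i\<in>{1..T}. xs i \<in> X})"
    by (rule bdd_aboveI2)
  then show ?thesis unfolding info_gain_def
    by (rule cSUP_upper[rotated]) (use pts in auto)
qed

lemma sum_post_var_le_info_gain:
  assumes ker: "kernel_on k X" and sig: "\<sigma> > 0" and pts: "\<forall>i\<in>{1..T}. xs i \<in> X"
    and k1: "\<forall>x\<in>X. \<forall>y\<in>X. k x y \<le> 1"
  shows "(\<Sum>t<T. post_var k \<sigma> xs t (xs (Suc t))) \<le> 2 * info_gain k \<sigma> X T / ln (1 + 1 / \<sigma>\<^sup>2)"
proof -
  define v where "v t = post_var k \<sigma> xs t (xs (Suc t))" for t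
  define L where "L = ln (1 + 1 / \<sigma>\<^sup>2)"
  have "L > 0" unfolding L_def using sig by (simp add: ln_gt_zero)
  have "(\<Sum>t<T. v t) * L = (\<Sum>t<T. v t * L)" by (simp add: sum_distrib_right)
  also have "\<dots> \<le> (\<Sum>t<T. ln (1 + v t / \<sigma>\<^sup>2))"
  proof (rule sum_mono)
    fix t assume "t \<in> {..<T}"
    then have "\<forall>i\<in>{1..Suc t}. xs i \<in> X" using pts by auto
    note b = post_var_next_bounds[OF ker sig this k1, folded v_def]
    have "v t * ln (1 + 1 / \<sigma>\<^sup>2) \<le> ln (1 + 1 / \<sigma>\<^sup>2 * v t)"
      by (rule mult_ln_one_plus_le) (use b sig in auto)
    then show "v t * L \<le> ln (1 + v t / \<sigma>\<^sup>2)" unfolding L_def by simp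
  qed
  also have "\<dots> \<le> 2 * info_gain k \<sigma> X T"
    using ln_det_le_info_gain[OF ker sig pts k1]
    unfolding ln_det_eq_sum_ln_post_var[OF ker sig pts] v_def by linarith
  finally show ?thesis using \<open>L > 0\<close> unfolding v_def L_def by (simp add: pos_le_divide_eq)
qed

lemma sum_sqrt_le_sqrt_card_mult_sum:
  fixes v :: "'a \<Rightarrow> real"
  assumes "\<forall>t\<in>A. v t \<ge> 0"
  shows "(\<Sum>t\<in>A. sqrt (v t)) \<le> sqrt (card A * (\<Sum>t\<in>A. v t))"
proof (rule real_le_rsqrt)
  have "(\<Sum>t\<in>A. 1 * sqrt (v t))\<^sup>2 \<le> (\<Sum>t\<in>A. 1\<^sup>2) * (\<Sum>t\<in>A. (sqrt (v t))\<^sup>2)"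
    by (rule Cauchy_Schwarz_ineq_sum)
  also have "(\<Sum>t\<in>A. (sqrt (v t))\<^sup>2) = (\<Sum>t\<in>A. v t)"
    using assms by (intro sum.cong) auto
  finally show "(\<Sum>t\<in>A. sqrt (v t))\<^sup>2 \<le> card A * (\<Sum>t\<in>A. v t)" by simp
qed

section \<open>Regret of the UCB rule\<close>

lemma ucb_instant_regret:
  assumes ker: "kernel_on k X" and sig: "\<sigma> > 0" and f: "in_rkhs k X f"
    and pts: "\<forall>i\<in>{1..Suc t}. xs i \<in> X" and z: "z \<in> X"
    and ucb: "\<forall>x\<in>X. post_mean k \<sigma> xs (\<lambda>i. f (xs i)) t x + rkhs_norm k X f * sqrt (post_var k \<sigma> xs t x)
      \<le> post_mean k \<sigma> xs (\<lambda>i. f (xs i)) t (xs (Suc t))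
        + rkhs_norm k X f * sqrt (post_var k \<sigma> xs t (xs (Suc t)))"
  shows "f z - f (xs (Suc t)) \<le> 2 * rkhs_norm k X f * sqrt (post_var k \<sigma> xs t (xs (Suc t)))"
proof -
  have pts': "\<forall>i\<in>{1..t}. xs i \<in> X" and x: "xs (Suc t) \<in> X" using pts by auto
  show ?thesis
    using rkhs_confidence[OF ker sig pts' f z] rkhs_confidence[OF ker sig pts' f x] ucb[rule_format, OF z]
    by linarith
qed

lemma ucb_cumulative_regret:
  assumes ker: "kernel_on k X" and k1: "\<forall>x\<in>X. \<forall>y\<in>X. k x y \<le> 1" and sig: "\<sigma> > 0"
    and f: "in_rkhs k X f" and z: "z \<in> X"
    and ucb: "\<forall>t\<in>{1..T}. xs t \<in> X \<and>
      (\<forall>x\<in>X. post_mean k \<sigma> xs (\<lambda>i. f (xs i)) (t - 1) x + rkhs_norm k X f * sqrt (post_var k \<sigma> xs (t - 1) x)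
        \<le> post_mean k \<sigma> xs (\<lambda>i. f (xs i)) (t - 1) (xs t)
          + rkhs_norm k X f * sqrt (post_var k \<sigma> xs (t - 1) (xs t)))"
  shows "(\<Sum>t=1..T. f z - f (xs t))
       \<le> rkhs_norm k X f * sqrt (T * (8 / ln (1 + 1 / \<sigma>\<^sup>2)) * info_gain k \<sigma> X T)"
proof -
  define B v where "B = rkhs_norm k X f" and "v t = post_var k \<sigma> xs t (xs (Suc t))" for t
  define S where "S = 2 * info_gain k \<sigma> X T / ln (1 + 1 / \<sigma>\<^sup>2)"
  have B: "B \<ge> 0" unfolding B_def by (rule rkhs_norm_nonneg[OF ker f])
  have pts: "\<forall>i\<in>{1..T}. xs i \<in> X" using ucb by auto
  have v: "\<forall>t\<in>{..<T}. 0 \<le> v t"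
    using post_var_next_bounds(1)[OF ker sig _ k1] pts unfolding v_def by simp
  have "(\<Sum>t=1..T. f z - f (xs t)) = (\<Sum>t<T. f z - f (xs (Suc t)))"
    by (induction T) (auto simp: sum.atLeast_Suc_atMost)
  also have "\<dots> \<le> (\<Sum>t<T. 2 * B * sqrt (v t))"
  proof (rule sum_mono)
    fix t assume t: "t \<in> {..<T}"
    have "\<forall>i\<in>{1..Suc t}. xs i \<in> X" using pts t by auto
    moreover have "\<forall>x\<in>X. post_mean k \<sigma> xs (\<lambda>i. f (xs i)) t x + B * sqrt (post_var k \<sigma> xs t x)
        \<le> post_mean k \<sigma> xs (\<lambda>i. f (xs i)) t (xs (Suc t)) + B * sqrt (v t)"
      using ucb t unfolding B_def v_def by (metis Suc_le_eq atLeastAtMost_iff diff_Suc_1 le_add1 lessThan_iff plus_1_eq_Suc)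
    ultimately show "f z - f (xs (Suc t)) \<le> 2 * B * sqrt (v t)"
      unfolding B_def v_def by (rule ucb_instant_regret[OF ker sig f _ z])
  qed
  also have "\<dots> = 2 * B * (\<Sum>t<T. sqrt (v t))" by (simp add: sum_distrib_left)
  also have "\<dots> \<le> 2 * B * sqrt (T * (\<Sum>t<T. v t))"
    using sum_sqrt_le_sqrt_card_mult_sum[OF v] B by (intro mult_left_mono) simp_all
  also have "\<dots> \<le> 2 * B * sqrt (T * S)"
    using sum_post_var_le_info_gain[OF ker sig pts k1] B
    unfolding v_def S_def by (intro mult_left_mono real_sqrt_le_mono) simp_all
  also have "\<dots> = B * sqrt (4 * (T * S))"
    by (simp add: real_sqrt_mult)
  also have "4 * (T * S) = T * (8 / ln (1 + 1 / \<sigma>\<^sup>2)) * info_gain k \<sigma> X T"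
    unfolding S_def by simp
  finally show ?thesis unfolding B_def .
qed

lemma simple_regret_le_average:
  fixes g :: "nat \<Rightarrow> real"
  assumes "T \<ge> 1"
  shows "c - (MAX t\<in>{1..T}. g t) \<le> (\<Sum>t=1..T. c - g t) / T"
proof -
  have "(\<Sum>t=1..T. c - (MAX t\<in>{1..T}. g t)) \<le> (\<Sum>t=1..T. c - g t)"
    by (intro sum_mono) (simp add: Max_ge)
  then show ?thesis using assms by (simp add: field_simps)
qed

theorem corollary5:
  fixes X :: "'d::euclidean_space set"
    and k :: "'d \<Rightarrow> 'd \<Rightarrow> real"
    and f :: "'d \<Rightarrow> real"
    and \<sigma> :: real
    and xs :: "nat \<Rightarrow> 'd"
    and xstar :: 'd
    and T :: nat
  assumes "compact X"
    and "kernel_on k X"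
    and "\<forall>x\<in>X. \<forall>y\<in>X. k x y \<le> 1"
    and "\<sigma> > 0"
    and "in_rkhs k X f"
    and "xstar \<in> X" and "\<forall>x\<in>X. f x \<le> f xstar"
    and "T \<ge> 1"
    and "\<forall>t\<in>{1..T}. xs t \<in> X \<and>
           (\<forall>x\<in>X. post_mean k \<sigma> xs (\<lambda>i. f (xs i)) (t - 1) x
                     + rkhs_norm k X f * sqrt (post_var k \<sigma> xs (t - 1) x)
                   \<le> post_mean k \<sigma> xs (\<lambda>i. f (xs i)) (t - 1) (xs t)
                     + rkhs_norm k X f * sqrt (post_var k \<sigma> xs (t - 1) (xs t)))"
    and "inj_on xs {1..T}"
  shows "((\<Sum>t=1..T. f xstar - f (xs t))
           \<le> rkhs_norm k X f * sqrt (T * (8 / ln (1 + 1 / \<sigma>\<^sup>2)) * info_gain k \<sigma> X T)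
             + 2 * T * rkhs_norm k X f * \<sigma>) \<and>
         (f xstar - (MAX t\<in>{1..T}. f (xs t))
           \<le> rkhs_norm k X f * sqrt ((8 / ln (1 + 1 / \<sigma>\<^sup>2)) * info_gain k \<sigma> X T / T)
             + 2 * rkhs_norm k X f * \<sigma>)"
proof -
  define B C where "B = rkhs_norm k X f" and "C = 8 / ln (1 + 1 / \<sigma>\<^sup>2) * info_gain k \<sigma> X T"
  have T: "real T > 0" using assms(8) by simp
  have R: "(\<Sum>t=1..T. f xstar - f (xs t)) \<le> B * sqrt (T * (8 / ln (1 + 1 / \<sigma>\<^sup>2)) * info_gain k \<sigma> X T)"
    unfolding B_def by (rule ucb_cumulative_regret[OF assms(2,3,4,5,6,9)])
  have sq: "T * (8 / ln (1 + 1 / \<sigma>\<^sup>2)) * info_gain k \<sigma> X T = (real T)\<^sup>2 * (C / T)"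
    using T unfolding C_def by (simp add: power2_eq_square)
  have "sqrt (T * (8 / ln (1 + 1 / \<sigma>\<^sup>2)) * info_gain k \<sigma> X T) = sqrt (C / T) * T"
    unfolding sq real_sqrt_mult by simp
  with R have "(\<Sum>t=1..T. f xstar - f (xs t)) / T \<le> B * sqrt (C / T)"
    unfolding pos_divide_le_eq[OF T] by (simp only: mult.assoc)
  then have "f xstar - (MAX t\<in>{1..T}. f (xs t)) \<le> B * sqrt (C / T)"
    using simple_regret_le_average[OF assms(8), of "f xstar" "\<lambda>t. f (xs t)"] by linarith
  moreover have "0 \<le> 2 * T * B * \<sigma>" "0 \<le> 2 * B * \<sigma>"
    using rkhs_norm_nonneg[OF assms(2,5)] assms(4) unfolding B_def by simp_all
  ultimately show ?thesis using R unfolding B_def C_def by linarith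
qed

end
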